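(* Let $K$, $c$, $s$ be as in the context, let $n\ge1$ and let $\gamma_1,\ldots,\gamma_n,\beta_1,\ldots,\beta_n$ be integers. For $i=1,\ldots,n$ let $B_i=\{j\in\{1,\ldots,n\}:\gamma_j=\gamma_i\}$, and let $\gamma_0=\max\{|\gamma_1|,\ldots,|\gamma_n|\}$. Let $F=(c^{s^{\gamma_1}})^{\beta_1}(c^{s^{\gamma_2}})^{\beta_2}\cdots(c^{s^{\gamma_n}})^{\beta_n}$, an element of the base group $K^{\langle s\rangle}$, regarded as a function $\langle s\rangle\to K$. If $\mu$ is an integer with $|\mu|>3\gamma_0$ and $\sum_{j\in B_i}\beta_j=0$ for $i=1,\ldots,n$, then $F(s^{\mu})=1$.
   Context: Notation: $x^y=yxy^{-1}$. For groups $A,B$, the wreath product $A\,\mathrm{Wr}\,B$ is the semidirect product $A^B\rtimes B$, where $A^B$ is the group of all functions $B\to A$ with pointwise multiplication and $B$ acts by $(bf)(x)=f(xb)$, written $f^b=bfb^{-1}$; in particular $(c^{s^{\gamma}})(s^k)=c(s^{k+\gamma})$. $H$ is a group generated by a countable set $\{a^{(1)},a^{(2)},\ldots\}$. Let $Z=\langle z\rangle$ be infinite cyclic and $b^{(i)}\in H^Z$ with $b^{(i)}(z^k)=a^{(i)}$ if $k>0$ and $1$ otherwise; $K=\langle z,b^{(i)}\ (i\in\mathbb{N})\rangle\le H\,\mathrm{Wr}\,Z$. Let $\langle s\rangle$ be infinite cyclic and $c\in K^{\langle s\rangle}$ with $c(s)=z$, $c(s^{2^i})=b^{(i)}$ for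 $i>0$, $c(s^k)=1$ otherwise; everything takes place in $K\,\mathrm{Wr}\,\langle s\rangle$. *)

theory Defs
  imports "HOL-Algebra.Algebra"
begin

text \<open>Wreath product A Wr Z of a group A with an infinite cyclic group Z = <t>,
  where t^k is represented by the integer k.  An element (f, k) stands for f t^k
  with f : Z -> A arbitrary (all functions).  Multiplication:
  (f t^k)(g t^l) = f (t^k g t^-k) t^(k+l), and (t^k g t^-k)(t^x) = g(t^(x+k)).\<close>
definition wrZ :: "('a, 'b) monoid_scheme \<Rightarrow> ((int \<Rightarrow> 'a) \<times> int) monoid" where
  "wrZ A = \<lparr> carrier = {(f, k). f \<in> UNIV \<rightarrow> carrier A},
             monoid.mult = (\<lambda>(f, k) (g, l). (\<lambda>x. f x \<otimes>\<^bsub>A\<^esub> g (x + k), k + l)),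
             one = (\<lambda>_. \<one>\<^bsub>A\<^esub>, 0) \<rparr>"

definition zgen :: "('a, 'b) monoid_scheme \<Rightarrow> (int \<Rightarrow> 'a) \<times> int" where
  "zgen H = (\<lambda>_. \<one>\<^bsub>H\<^esub>, 1)"

definition bgen :: "('a, 'b) monoid_scheme \<Rightarrow> (nat \<Rightarrow> 'a) \<Rightarrow> nat \<Rightarrow> (int \<Rightarrow> 'a) \<times> int" where
  "bgen H a i = (\<lambda>k. if k > 0 then a i else \<one>\<^bsub>H\<^esub>, 0)"

definition Kgrp :: "('a, 'b) monoid_scheme \<Rightarrow> (nat \<Rightarrow> 'a) \<Rightarrow> ((int \<Rightarrow> 'a) \<times> int) monoid" where
  "Kgrp H a = (wrZ H) \<lparr> carrier := generate (wrZ H) (insert (zgen H) (bgen H a ` {1..})) \<rparr>"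

definition cfun :: "('a, 'b) monoid_scheme \<Rightarrow> (nat \<Rightarrow> 'a) \<Rightarrow> int \<Rightarrow> (int \<Rightarrow> 'a) \<times> int" where
  "cfun H a k = (if k = 1 then zgen H
                 else if (\<exists>i::nat. i > 0 \<and> k = 2 ^ i) then bgen H a (THE i::nat. i > 0 \<and> k = 2 ^ i)
                 else \<one>\<^bsub>Kgrp H a\<^esub>)"

definition sgen :: "('a, 'b) monoid_scheme \<Rightarrow> (nat \<Rightarrow> 'a) \<Rightarrow> (int \<Rightarrow> (int \<Rightarrow> 'a) \<times> int) \<times> int" where
  "sgen H a = (\<lambda>_. \<one>\<^bsub>Kgrp H a\<^esub>, 1)"

definition celem :: "('a, 'b) monoid_scheme \<Rightarrow> (nat \<Rightarrow> 'a) \<Rightarrow> (int \<Rightarrow> (int \<Rightarrow> 'a) \<times> int) \<times> int" where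
  "celem H a = (cfun H a, 0)"

definition conjg :: "('c, 'd) monoid_scheme \<Rightarrow> 'c \<Rightarrow> 'c \<Rightarrow> 'c" where
  "conjg G x y = y \<otimes>\<^bsub>G\<^esub> x \<otimes>\<^bsub>G\<^esub> inv\<^bsub>G\<^esub> y"

definition ordprod :: "('c, 'd) monoid_scheme \<Rightarrow> 'e list \<Rightarrow> ('e \<Rightarrow> 'c) \<Rightarrow> 'c" where
  "ordprod G xs f = foldr (\<lambda>j acc. f j \<otimes>\<^bsub>G\<^esub> acc) xs \<one>\<^bsub>G\<^esub>"

end

theory Submission imports Defs begin

text \<open>Conjugating c by s^\<gamma> shifts its argument by \<gamma>, so
  F(s^\<mu>) is the ordered product of the factors c(s^(\<mu>+\<gamma>_j))^\<beta>_j.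
  The function c is trivial outside the powers of two, and the window
  [\<mu> - \<gamma>_0, \<mu> + \<gamma>_0] contains at most one power of two: any power of two in
  it exceeds 2\<gamma>_0, and two distinct such powers differ by more than 2\<gamma>_0.
  Hence all nontrivial factors are powers of one element c(s^(\<mu>+d)), taken
  over the block \<gamma>_j = d, and the exponents there sum to zero.\<close>

lemma wrZ_carrier [simp]: "(f, k) \<in> carrier (wrZ A) \<longleftrightarrow> (\<forall>x. f x \<in> carrier A)"
  by (auto simp: wrZ_def)

lemma wrZ_mult [simp]: "(f, k) \<otimes>\<^bsub>wrZ A\<^esub> (g, l) = (\<lambda>x. f x \<otimes>\<^bsub>A\<^esub> g (x + k), k + l)"
  by (simp add: wrZ_def)

lemma wrZ_one [simp]: "\<one>\<^bsub>wrZ A\<^esub> = (\<lambda>_. \<one>\<^bsub>A\<^esub>, 0)"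
  by (simp add: wrZ_def)

lemma wrZ_group:
  assumes "group A" shows "group (wrZ A)"
proof (rule groupI)
  interpret A: group A by fact
  fix x y z assume "x \<in> carrier (wrZ A)" "y \<in> carrier (wrZ A)" "z \<in> carrier (wrZ A)"
  moreover obtain f k g l h m where "x = (f, k)" "y = (g, l)" "z = (h, m)" by (cases x, cases y, cases z)
  ultimately have xyz: "x = (f, k)" "y = (g, l)" "z = (h, m)"
    and f: "\<And>t. f t \<in> carrier A" and g: "\<And>t. g t \<in> carrier A" and h: "\<And>t. h t \<in> carrier A"
    by auto
  show "x \<otimes>\<^bsub>wrZ A\<^esub> y \<in> carrier (wrZ A)"
    using f g by (simp add: xyz)
  show "x \<otimes>\<^bsub>wrZ A\<^esub> y \<otimes>\<^bsub>wrZ A\<^esub> z = x \<otimes>\<^bsub>wrZ A\<^esub> (y \<otimes>\<^bsub>wrZ A\<^esub> z)"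
    using f g h by (simp add: xyz A.m_assoc add.assoc)
  show "\<one>\<^bsub>wrZ A\<^esub> \<otimes>\<^bsub>wrZ A\<^esub> x = x"
    using f by (simp add: xyz)
  show "\<exists>y\<in>carrier (wrZ A). y \<otimes>\<^bsub>wrZ A\<^esub> x = \<one>\<^bsub>wrZ A\<^esub>"
    using f by (intro bexI[of _ "(\<lambda>t. inv\<^bsub>A\<^esub> f (t - k), -k)"]) (auto simp: xyz)
qed (use assms in \<open>simp add: group.is_monoid\<close>)

lemma wrZ_shift_inv:
  assumes "group A" shows "inv\<^bsub>wrZ A\<^esub> (\<lambda>_. \<one>\<^bsub>A\<^esub>, k) = (\<lambda>_. \<one>\<^bsub>A\<^esub>, -k)"
proof -
  interpret W: group "wrZ A" by (rule wrZ_group[OF assms])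
  interpret A: group A by fact
  show ?thesis by (rule W.inv_equality) simp_all
qed

lemma wrZ_shift_pow:
  assumes "group A" shows "(\<lambda>_. \<one>\<^bsub>A\<^esub>, 1::int) [^]\<^bsub>wrZ A\<^esub> (k::int) = (\<lambda>_. \<one>\<^bsub>A\<^esub>, k)"
proof -
  interpret W: group "wrZ A" by (rule wrZ_group[OF assms])
  interpret A: group A by fact
  have nat_pow: "(\<lambda>_. \<one>\<^bsub>A\<^esub>, 1::int) [^]\<^bsub>wrZ A\<^esub> (m::nat) = (\<lambda>_. \<one>\<^bsub>A\<^esub>, int m)" for m
    by (induction m) simp_all
  show ?thesis by (simp add: int_pow_def2 nat_pow wrZ_shift_inv[OF assms])
qed

lemma wrZ_base_inv:
  assumes "group A" "\<And>x. f x \<in> carrier A"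
  shows "inv\<^bsub>wrZ A\<^esub> (f, 0) = (\<lambda>x. inv\<^bsub>A\<^esub> f x, 0)"
proof -
  interpret W: group "wrZ A" by (rule wrZ_group[OF assms(1)])
  interpret A: group A by fact
  show ?thesis by (rule W.inv_equality) (simp_all add: assms(2))
qed

lemma wrZ_base_pow:
  assumes "group A" "\<And>x. f x \<in> carrier A"
  shows "(f, 0::int) [^]\<^bsub>wrZ A\<^esub> (b::int) = (\<lambda>x. f x [^]\<^bsub>A\<^esub> b, 0)"
proof -
  interpret W: group "wrZ A" by (rule wrZ_group[OF assms(1)])
  interpret A: group A by fact
  have nat_pow: "(f, 0::int) [^]\<^bsub>wrZ A\<^esub> (m::nat) = (\<lambda>x. f x [^]\<^bsub>A\<^esub> m, 0)" for m
    by (induction m) simp_all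
  show ?thesis
    unfolding int_pow_def2[of "wrZ A"] int_pow_def2[of A]
    by (simp add: nat_pow wrZ_base_inv[OF assms(1)] assms(2))
qed

lemma wrZ_conjg_shift:
  assumes "group A" "\<And>x. f x \<in> carrier A"
  shows "conjg (wrZ A) (f, 0) ((\<lambda>_. \<one>\<^bsub>A\<^esub>, 1::int) [^]\<^bsub>wrZ A\<^esub> (g::int)) = (\<lambda>x. f (x + g), 0)"
proof -
  interpret A: group A by fact
  show ?thesis
    using assms(2) by (simp add: conjg_def wrZ_shift_pow[OF assms(1)] wrZ_shift_inv[OF assms(1)])
qed

lemma ordprod_wrZ_base:
  "ordprod (wrZ A) xs (\<lambda>j. (f j, 0)) = (\<lambda>x. ordprod A xs (\<lambda>j. f j x), 0)"
  by (induction xs) (simp_all add: ordprod_def)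

lemma ordprod_int_pow:
  assumes "group A" "x \<in> carrier A"
  shows "ordprod A xs (\<lambda>j. x [^]\<^bsub>A\<^esub> (e j :: int)) = x [^]\<^bsub>A\<^esub> (\<Sum>j\<leftarrow>xs. e j)"
proof -
  interpret A: group A by fact
  show ?thesis by (induction xs) (simp_all add: ordprod_def A.int_pow_mult[OF assms(2)])
qed

lemma ordprod_pow_single_block:
  fixes \<gamma> \<beta> :: "nat \<Rightarrow> int" and g :: "int \<Rightarrow> 'c"
  assumes "group A" "\<And>q. g q \<in> carrier A"
    and single: "\<And>j k. \<lbrakk>j \<in> {1..n}; k \<in> {1..n}; g (\<gamma> j) \<noteq> \<one>\<^bsub>A\<^esub>; g (\<gamma> k) \<noteq> \<one>\<^bsub>A\<^esub>\<rbrakk> \<Longrightarrow> \<gamma> j = \<gamma> k"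
    and blocks: "\<forall>i \<in> {1..n}. (\<Sum>j \<in> {j \<in> {1..n}. \<gamma> j = \<gamma> i}. \<beta> j) = 0"
  shows "ordprod A [1..<n+1] (\<lambda>j. g (\<gamma> j) [^]\<^bsub>A\<^esub> \<beta> j) = \<one>\<^bsub>A\<^esub>"
proof -
  interpret A: group A by fact
  have set_eq: "set [1..<n+1] = {1..n}" by auto
  show ?thesis
  proof (cases "\<exists>i\<in>{1..n}. g (\<gamma> i) \<noteq> \<one>\<^bsub>A\<^esub>")
    case False
    then have "ordprod A [1..<n+1] (\<lambda>j. g (\<gamma> j) [^]\<^bsub>A\<^esub> \<beta> j) = ordprod A [1..<n+1] (\<lambda>j. \<one>\<^bsub>A\<^esub>)"
      unfolding ordprod_def by (intro foldr_cong) (auto simp: set_eq)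
    also have "\<dots> = \<one>\<^bsub>A\<^esub>" by (induction n) (simp_all add: ordprod_def)
    finally show ?thesis .
  next
    case True
    then obtain i where i: "i \<in> {1..n}" "g (\<gamma> i) \<noteq> \<one>\<^bsub>A\<^esub>" by blast
    define e where "e j = (if \<gamma> j = \<gamma> i then \<beta> j else 0)" for j
    have "g (\<gamma> j) [^]\<^bsub>A\<^esub> \<beta> j = g (\<gamma> i) [^]\<^bsub>A\<^esub> e j" if "j \<in> {1..n}" for j
    proof (cases "\<gamma> j = \<gamma> i")
      case False
      then have "g (\<gamma> j) = \<one>\<^bsub>A\<^esub>" using single[OF that i(1) _ i(2)] by blast
      then show ?thesis using False by (simp add: e_def)
    qed (simp add: e_def)
    then have "ordprod A [1..<n+1] (\<lambda>j. g (\<gamma> j) [^]\<^bsub>A\<^esub> \<beta> j)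
        = ordprod A [1..<n+1] (\<lambda>j. g (\<gamma> i) [^]\<^bsub>A\<^esub> e j)"
      unfolding ordprod_def by (intro foldr_cong) (auto simp: set_eq)
    also have "\<dots> = g (\<gamma> i) [^]\<^bsub>A\<^esub> (\<Sum>j\<leftarrow>[1..<n+1]. e j)"
      by (rule ordprod_int_pow[OF assms(1,2)])
    also have "(\<Sum>j\<leftarrow>[1..<n+1]. e j) = (\<Sum>j \<in> {1..n}. e j)"
      by (simp only: sum_list_distinct_conv_sum_set distinct_upt set_eq)
    also have "\<dots> = (\<Sum>j \<in> {j \<in> {1..n}. \<gamma> j = \<gamma> i}. \<beta> j)"
      unfolding e_def by (rule sum.inter_filter[symmetric]) simp
    finally show ?thesis using blocks i(1) by simp
  qed
qed

lemma powers_of_two_far_apart: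
  fixes M :: int
  assumes "i < k" "(2::int) ^ i > 2 * M"
  shows "(2::int) ^ k - 2 ^ i > 2 * M"
proof -
  have "(2::int) ^ Suc i \<le> 2 ^ k" using assms(1) by (intro power_increasing) auto
  then show ?thesis using assms(2) by simp
qed

lemma power_of_two_window_unique:
  fixes \<mu> u v M :: int
  assumes "\<bar>\<mu>\<bar> > 3 * M" "\<bar>u\<bar> \<le> M" "\<bar>v\<bar> \<le> M"
    and "\<mu> + u = 2 ^ i" "\<mu> + v = 2 ^ k"
  shows "u = v"
proof -
  have "\<mu> + u > 0" using assms(4) by simp
  then have "\<mu> > 3 * M" using assms(1,2) by linarith
  then have big: "(2::int) ^ i > 2 * M" "(2::int) ^ k > 2 * M"
    using assms(2-5) by linarith+
  have "i = k"
  proof (cases i k rule: linorder_cases)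
    case less
    then show ?thesis using powers_of_two_far_apart[OF less big(1)] assms(2-5) by linarith
  next
    case greater
    then show ?thesis using powers_of_two_far_apart[OF greater big(2)] assms(2-5) by linarith
  qed
  then show ?thesis using assms(4,5) by simp
qed

lemma cfun_support:
  assumes "cfun H a q \<noteq> \<one>\<^bsub>Kgrp H a\<^esub>" shows "\<exists>i::nat. q = 2 ^ i"
  using assms unfolding cfun_def by (metis power_0)

lemma Kgrp_group:
  assumes "group H" "a ` {1..} \<subseteq> carrier H"
  shows "group (Kgrp H a)"
proof -
  interpret W: group "wrZ H" by (rule wrZ_group[OF assms(1)])
  interpret H: group H by fact
  have "insert (zgen H) (bgen H a ` {1..}) \<subseteq> carrier (wrZ H)"
    using assms(2) by (auto simp: zgen_def bgen_def)
  then show ?thesis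
    unfolding Kgrp_def by (rule subgroup.subgroup_is_group[OF W.generate_is_subgroup W.is_group])
qed

lemma cfun_closed: "cfun H a q \<in> carrier (Kgrp H a)"
proof -
  let ?S = "insert (zgen H) (bgen H a ` {1..})"
  have "(THE i::nat. i > 0 \<and> q = 2 ^ i) \<in> {1..}" if "i > 0" "q = 2 ^ i" for i :: nat
  proof -
    have "(THE i::nat. i > 0 \<and> q = 2 ^ i) = i"
      using that by (intro the_equality) auto
    then show ?thesis using that by simp
  qed
  then have "cfun H a q \<in> insert \<one>\<^bsub>Kgrp H a\<^esub> ?S"
    unfolding cfun_def by auto
  moreover have "?S \<subseteq> carrier (Kgrp H a)"
    unfolding Kgrp_def by (auto intro: generate.incl)
  ultimately show ?thesis
    using generate.one[of "wrZ H"] by (auto simp: Kgrp_def)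
qed

theorem lemma3:
  fixes H :: "('a, 'b) monoid_scheme" and a :: "nat \<Rightarrow> 'a"
    and n :: nat and \<gamma> \<beta> :: "nat \<Rightarrow> int" and \<mu> :: int
  assumes "group H"
    and "a ` {1..} \<subseteq> carrier H"
    and "generate H (a ` {1..}) = carrier H"
    and "n \<ge> 1"
    and "\<bar>\<mu>\<bar> > 3 * Max {\<bar>\<gamma> j\<bar> | j. j \<in> {1..n}}"
    and "\<forall>i \<in> {1..n}. (\<Sum>j \<in> {j \<in> {1..n}. \<gamma> j = \<gamma> i}. \<beta> j) = 0"
  shows "fst (ordprod (wrZ (Kgrp H a)) [1..<n+1]
            (\<lambda>j. (conjg (wrZ (Kgrp H a)) (celem H a)
                     (sgen H a [^]\<^bsub>wrZ (Kgrp H a)\<^esub> \<gamma> j)) [^]\<^bsub>wrZ (Kgrp H a)\<^esub> \<beta> j))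
         \<mu> = \<one>\<^bsub>Kgrp H a\<^esub>"
proof -
  let ?K = "Kgrp H a"
  let ?g = "\<lambda>q. cfun H a (\<mu> + q)"
  have K: "group ?K" by (rule Kgrp_group[OF assms(1,2)])
  have factor: "(conjg (wrZ ?K) (celem H a) (sgen H a [^]\<^bsub>wrZ ?K\<^esub> \<gamma> j)) [^]\<^bsub>wrZ ?K\<^esub> \<beta> j
      = (\<lambda>x. cfun H a (x + \<gamma> j) [^]\<^bsub>?K\<^esub> \<beta> j, 0)" for j
    unfolding sgen_def celem_def
    by (simp add: wrZ_conjg_shift[OF K cfun_closed] wrZ_base_pow[OF K cfun_closed])
  have bound: "\<bar>\<gamma> j\<bar> \<le> Max {\<bar>\<gamma> j\<bar> | j. j \<in> {1..n}}" if "j \<in> {1..n}" for j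
    using that by (intro Max_ge) auto
  have "\<gamma> j = \<gamma> k"
    if "j \<in> {1..n}" "k \<in> {1..n}" "?g (\<gamma> j) \<noteq> \<one>\<^bsub>?K\<^esub>" "?g (\<gamma> k) \<noteq> \<one>\<^bsub>?K\<^esub>" for j k
    using power_of_two_window_unique[OF assms(5) bound bound] cfun_support that by metis
  then have "ordprod ?K [1..<n+1] (\<lambda>j. ?g (\<gamma> j) [^]\<^bsub>?K\<^esub> \<beta> j) = \<one>\<^bsub>?K\<^esub>"
    by (rule ordprod_pow_single_block[OF K cfun_closed _ assms(6)])
  then show ?thesis
    by (simp add: factor ordprod_wrZ_base add.commute)
qed

end
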